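(* Let $V$ be a verifier with randomness complexity $r(n)=O(\log n)$ and query complexity $q(n)=O(1)$, let $x\in\{0,1\}^n$, and let $\pi^{\mathsf{start}}(x),\pi^{\mathsf{goal}}(x)\in\{0,1\}^{\mathrm{poly}(n)}$ be two proofs that $V(x)$ accepts with probability $1$. Then there always exists a reconfiguration sequence $(\pi^{(1)},\ldots,\pi^{(T)})$ from $\pi^{\mathsf{start}}(x)$ to $\pi^{\mathsf{goal}}(x)$ over $\{0,1\}^{\mathrm{poly}(n)}$ such that \[\Pr_{t\sim\{1,\ldots,T\},\,(I,D)\sim V(x)}\bigl[D(\pi^{(t)}|_I)=1\bigr] > 1-\frac{1}{2^{\Omega(n)}},\] where $t$ is uniform and independent of the random bits of $V$.
   Context: A verifier with randomness complexity $r$ and query complexity $q$ is a probabilistic polynomial-time algorithm $V$ that, on input $x$, tosses $r(|x|)$ random bits and generates from them a tuple of $q(|x|)$ positions $I$ and a circuit $D\colon\{0,1\}^{q}\to\{0,1\}$; $(I,D)\sim V(x)$ denotes this random pair, and $V$ accepts proof $\pi$ (for a given choice of randomness) when $D(\pi|_I)=1$, $\pi|_I$ being the restriction of $\pi$ to positions $I$. A reconfiguration sequence from $\pi^{\mathsf{start}}$ to $\pi^{\mathsf{goal}}$ over $\{0,1\}^m$ is a finite sequence of strings in $\{0,1\}^m$ starting at $\pi^{\mathsf{start}}$, ending at $\pi^{\mathsf{goal}}$, with consecutive strings differing in at most one bit. *)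

theory Defs
  imports Complex_Main
begin

text \<open>A verifier is modelled as a function taking the
input x and the random string (of length r |x|) to a pair (I, D): a list of queried
proof positions and a decision predicate on the restricted proof.\<close>

type_synonym verifier = "bool list \<Rightarrow> bool list \<Rightarrow> nat list \<times> (bool list \<Rightarrow> bool)"

definition restrict :: "bool list \<Rightarrow> nat list \<Rightarrow> bool list" where
  "restrict \<pi> I = map (\<lambda>i. \<pi> ! i) I"

definition rand_strings :: "nat \<Rightarrow> bool list set" where
  "rand_strings k = {\<rho>. length \<rho> = k}"

definition wf_verifier :: "verifier \<Rightarrow> (nat \<Rightarrow> nat) \<Rightarrow> (nat \<Rightarrow> nat) \<Rightarrow> (nat \<Rightarrow> nat) \<Rightarrow> bool" where
  "wf_verifier V r q l \<longleftrightarrow>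
     (\<forall>x. \<forall>\<rho> \<in> rand_strings (r (length x)).
        length (fst (V x \<rho>)) = q (length x) \<and>
        (\<forall>i \<in> set (fst (V x \<rho>)). i < l (length x)))"

definition acc_prob :: "verifier \<Rightarrow> (nat \<Rightarrow> nat) \<Rightarrow> bool list \<Rightarrow> bool list \<Rightarrow> real" where
  "acc_prob V r x \<pi> =
     real (card {\<rho> \<in> rand_strings (r (length x)). snd (V x \<rho>) (restrict \<pi> (fst (V x \<rho>)))})
     / 2 ^ r (length x)"

text \<open>Pr_{t ~ {1..T}, (I,D) ~ V(x)} [D(pi^(t)|_I) = 1], t uniform and independent
of V's randomness (the list index t ranges over 0..T-1).\<close>
definition seq_acc_prob :: "verifier \<Rightarrow> (nat \<Rightarrow> nat) \<Rightarrow> bool list \<Rightarrow> bool list list \<Rightarrow> real" where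
  "seq_acc_prob V r x ps =
     real (card {(t, \<rho>). t < length ps \<and> \<rho> \<in> rand_strings (r (length x)) \<and>
                 snd (V x \<rho>) (restrict (ps ! t) (fst (V x \<rho>)))})
     / (real (length ps) * 2 ^ r (length x))"

definition hamming :: "bool list \<Rightarrow> bool list \<Rightarrow> nat" where
  "hamming a b = card {i. i < length a \<and> a ! i \<noteq> b ! i}"

definition reconf_seq :: "nat \<Rightarrow> bool list \<Rightarrow> bool list \<Rightarrow> bool list list \<Rightarrow> bool" where
  "reconf_seq m s g ps \<longleftrightarrow>
     ps \<noteq> [] \<and> hd ps = s \<and> last ps = g \<and>
     (\<forall>p \<in> set ps. length p = m) \<and>
     (\<forall>t. Suc t < length ps \<longrightarrow> hamming (ps ! t) (ps ! Suc t) \<le> 1)"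

end

theory Submission
  imports Defs
begin

text \<open>Averaging over time makes the acceptance probability of a reconfiguration sequence
insensitive to its middle: stay at \<open>\<pi>s\<close> for \<open>m * 2^n\<close> steps and only then overwrite
\<open>\<pi>s\<close> by \<open>\<pi>g\<close> bit by bit, in \<open>m\<close> further steps. At least \<open>m * 2^n + 1\<close> of the
\<open>m * 2^n + m + 1\<close> proofs are accepted with probability 1, so the average exceeds
\<open>1 - 2^-n\<close> whatever the verifier does on the others.\<close>

lemma finite_rand_strings: "finite (rand_strings k)"
  using finite_lists_length_eq[of "UNIV :: bool set" k] by (simp add: rand_strings_def)

lemma acc_prob_nonneg: "0 \<le> acc_prob V r x \<pi>"
  by (simp add: acc_prob_def)

lemma seq_acc_prob_eq_average:
  "seq_acc_prob V r x ps = (\<Sum>t<length ps. acc_prob V r x (ps ! t)) / real (length ps)"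
proof -
  let ?R = "rand_strings (r (length x))"
  let ?acc = "\<lambda>t. {\<rho> \<in> ?R. snd (V x \<rho>) (restrict (ps ! t) (fst (V x \<rho>)))}"
  have "{(t, \<rho>). t < length ps \<and> \<rho> \<in> ?R \<and> snd (V x \<rho>) (restrict (ps ! t) (fst (V x \<rho>)))}
        = Sigma {..<length ps} ?acc"
    by auto
  then have "real (card {(t, \<rho>). t < length ps \<and> \<rho> \<in> ?R \<and>
                 snd (V x \<rho>) (restrict (ps ! t) (fst (V x \<rho>)))})
             = (\<Sum>t<length ps. real (card (?acc t)))"
    using finite_rand_strings by (simp add: card_SigmaI)
  then show ?thesis
    by (simp add: seq_acc_prob_def acc_prob_def sum_divide_distrib field_simps)
qed

lemma seq_acc_prob_ge_accepted_prefix: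
  assumes "k \<le> length ps" and "\<And>t. t < k \<Longrightarrow> acc_prob V r x (ps ! t) = 1"
  shows "real k / real (length ps) \<le> seq_acc_prob V r x ps"
proof -
  have "real k = (\<Sum>t<k. acc_prob V r x (ps ! t))"
    using assms(2) by simp
  also have "\<dots> \<le> (\<Sum>t<length ps. acc_prob V r x (ps ! t))"
    using assms(1) by (intro sum_mono2) (auto simp: acc_prob_nonneg)
  finally show ?thesis
    by (simp add: seq_acc_prob_eq_average divide_right_mono)
qed

lemma hamming_le_1I:
  assumes "\<And>i. i < length a \<Longrightarrow> a ! i \<noteq> b ! i \<Longrightarrow> i = j"
  shows "hamming a b \<le> 1"
proof -
  have "{i. i < length a \<and> a ! i \<noteq> b ! i} \<subseteq> {j}"
    using assms by blast
  then show ?thesis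
    unfolding hamming_def using card_mono[of "{j}"] by fastforce
qed

definition hybrid :: "'a list \<Rightarrow> 'a list \<Rightarrow> nat \<Rightarrow> 'a list" where
  "hybrid s g j = take j g @ drop j s"

lemma length_hybrid: "length s = length g \<Longrightarrow> length (hybrid s g j) = length s"
  by (simp add: hybrid_def)

lemma nth_hybrid:
  assumes "length s = length g" and "i < length s"
  shows "hybrid s g j ! i = (if i < j then g ! i else s ! i)"
  using assms by (cases "j \<le> length s") (auto simp: hybrid_def nth_append)

lemma hybrid_0 [simp]: "hybrid s g 0 = s"
  by (simp add: hybrid_def)

lemma hybrid_eq_right: "length s \<le> j \<Longrightarrow> length g \<le> j \<Longrightarrow> hybrid s g j = g"
  by (simp add: hybrid_def)

lemma hamming_hybrid:
  assumes "length s = length g" and "j \<le> k" and "k \<le> Suc j"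
  shows "hamming (hybrid s g j) (hybrid s g k) \<le> 1"
  using assms
  by (intro hamming_le_1I[where j = j]) (auto simp: length_hybrid nth_hybrid split: if_splits)

text \<open>Because of truncated subtraction, the first \<open>K + 1\<close> entries are all \<open>s\<close>.\<close>
definition padded_walk :: "nat \<Rightarrow> 'a list \<Rightarrow> 'a list \<Rightarrow> 'a list list" where
  "padded_walk K s g = map (\<lambda>t. hybrid s g (t - K)) [0..<K + length s + 1]"

lemma length_padded_walk: "length (padded_walk K s g) = K + length s + 1"
  by (simp add: padded_walk_def)

lemma nth_padded_walk:
  "t < K + length s + 1 \<Longrightarrow> padded_walk K s g ! t = hybrid s g (t - K)"
  by (simp add: padded_walk_def del: upt_Suc)

lemma reconf_seq_padded_walk:
  assumes "length s = m" and "length g = m"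
  shows "reconf_seq m s g (padded_walk K s g)"
  unfolding reconf_seq_def
proof (intro conjI ballI allI impI)
  show nonempty: "padded_walk K s g \<noteq> []"
    by (simp add: padded_walk_def)
  show "hd (padded_walk K s g) = s"
    using nonempty by (simp add: hd_conv_nth nth_padded_walk length_padded_walk)
  show "last (padded_walk K s g) = g"
    using nonempty assms
    by (simp add: last_conv_nth nth_padded_walk length_padded_walk hybrid_eq_right)
  show "length p = m" if "p \<in> set (padded_walk K s g)" for p
    using that assms by (auto simp: padded_walk_def length_hybrid)
  show "hamming (padded_walk K s g ! t) (padded_walk K s g ! Suc t) \<le> 1"
    if "Suc t < length (padded_walk K s g)" for t
    using that assms hamming_hybrid[of s g "t - K" "Suc t - K"]
    by (simp add: length_padded_walk nth_padded_walk)
qed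

lemma seq_acc_prob_padded_walk:
  assumes "acc_prob V r x s = 1"
  shows "real (K + 1) / real (K + length s + 1) \<le> seq_acc_prob V r x (padded_walk K s g)"
  using seq_acc_prob_ge_accepted_prefix[of "K + 1" "padded_walk K s g"] assms
  by (simp add: length_padded_walk nth_padded_walk)

lemma padding_fraction_gt:
  fixes m n :: nat
  shows "1 - 1 / 2 ^ n < real (m * 2 ^ n + 1) / real (m * 2 ^ n + m + 1)"
proof -
  have pos: "(0 :: real) < 2 ^ n"
    by simp
  have "1 - 1 / 2 ^ n = (2 ^ n - 1) / (2 ^ n :: real)"
    using pos by (simp add: field_simps)
  also have "\<dots> < real (m * 2 ^ n + 1) / real (m * 2 ^ n + m + 1)"
  proof -
    have "(2 ^ n - 1) * real (m * 2 ^ n + m + 1) < real (m * 2 ^ n + 1) * 2 ^ n"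
      using pos by (simp add: algebra_simps)
    then show ?thesis
      using pos by (simp add: divide_simps del: of_nat_add)
  qed
  finally show ?thesis .
qed

theorem mainTheorem5:
  fixes V :: verifier and r q l :: "nat \<Rightarrow> nat"
  assumes wf: "wf_verifier V r q l"
    and r_log: "\<exists>C N. \<forall>n\<ge>N. real (r n) \<le> C * log 2 (real n)"
    and q_const: "\<exists>C. \<forall>n. q n \<le> C"
    and l_poly: "\<exists>c k. \<forall>n. l n \<le> c * n ^ k + c"
  shows "\<exists>c>0. \<exists>N. \<forall>x \<pi>s \<pi>g. length x \<ge> N \<longrightarrow>
           length \<pi>s = l (length x) \<longrightarrow> length \<pi>g = l (length x) \<longrightarrow>
           acc_prob V r x \<pi>s = 1 \<longrightarrow> acc_prob V r x \<pi>g = 1 \<longrightarrow>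
           (\<exists>ps. reconf_seq (l (length x)) \<pi>s \<pi>g ps \<and>
                 seq_acc_prob V r x ps > 1 - 1 / 2 powr (c * real (length x)))"
proof (intro exI[of _ 1] conjI exI[of _ 0] allI impI)
  fix x \<pi>s \<pi>g :: "bool list"
  assume "length \<pi>s = l (length x)" "length \<pi>g = l (length x)" "acc_prob V r x \<pi>s = 1"
  let ?m = "l (length x)" and ?n = "length x"
  let ?ps = "padded_walk (?m * 2 ^ ?n) \<pi>s \<pi>g"
  have "reconf_seq ?m \<pi>s \<pi>g ?ps"
    using \<open>length \<pi>s = ?m\<close> \<open>length \<pi>g = ?m\<close> by (rule reconf_seq_padded_walk)
  moreover have "1 - 1 / 2 powr (1 * real ?n) < seq_acc_prob V r x ?ps"
    using padding_fraction_gt[where m = ?m and n = ?n]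
      seq_acc_prob_padded_walk[OF \<open>acc_prob V r x \<pi>s = 1\<close>, of "?m * 2 ^ ?n" \<pi>g]
      \<open>length \<pi>s = ?m\<close>
    by (simp add: powr_realpow)
  ultimately show "\<exists>ps. reconf_seq ?m \<pi>s \<pi>g ps \<and>
                     seq_acc_prob V r x ps > 1 - 1 / 2 powr (1 * real ?n)"
    by blast
qed simp

end
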